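(* Let $S$ be an entropy function for a finite set $X$, $X'\subset X$, and $S'(A):=\min_{\hat A\subseteq X\setminus X'}S(A\cup\hat A)$ for $A\subseteq X'$. Then $F_{S'}$ is the intersection of $F_S$ with the subspace $\mathbb R^{X'}\subseteq\mathbb R^X$ (functions vanishing on $X\setminus X'$).
   Context: An entropy function for a finite set $X$ is a function $S:2^X\to[0,\infty)$ with $S(\emptyset)=0$, $S(A)+S(B)\ge S(A\cap B)+S(A\cup B)$ and $S(A)+S(B)\ge S(A\setminus B)+S(B\setminus A)$ for all $A,B\subseteq X$. An EDF for $S$ is a function $f:X\to\mathbb R$ (a vector in $\mathbb R^X$) with $\big|\sum_{x\in A}f(x)\big|\le S(A)$ for all $A\subseteq X$; $F_S$ is the set of all EDFs for $S$. $S'$ is an entropy function for $X'$. *)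

theory Defs
  imports "HOL-Analysis.Analysis"
begin

text \<open>Entropy function for a finite set X: S : 2^X -> [0,inf).  We represent S as a
 total function on 'a set, constrained only on subsets of X.\<close>
definition entropy_function :: "'a set \<Rightarrow> ('a set \<Rightarrow> real) \<Rightarrow> bool" where
  "entropy_function X S \<longleftrightarrow>
     S {} = 0 \<and>
     (\<forall>A. A \<subseteq> X \<longrightarrow> S A \<ge> 0) \<and>
     (\<forall>A B. A \<subseteq> X \<longrightarrow> B \<subseteq> X \<longrightarrow> S A + S B \<ge> S (A \<inter> B) + S (A \<union> B)) \<and>
     (\<forall>A B. A \<subseteq> X \<longrightarrow> B \<subseteq> X \<longrightarrow> S A + S B \<ge> S (A - B) + S (B - A))"

text \<open>EDFs: vectors in R^X, represented as functions vanishing outside X.\<close>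
definition EDF_set :: "'a set \<Rightarrow> ('a set \<Rightarrow> real) \<Rightarrow> ('a \<Rightarrow> real) set" where
  "EDF_set X S = {f. (\<forall>x. x \<notin> X \<longrightarrow> f x = 0) \<and>
                     (\<forall>A. A \<subseteq> X \<longrightarrow> \<bar>\<Sum>x\<in>A. f x\<bar> \<le> S A)}"

definition restrict_entropy :: "'a set \<Rightarrow> 'a set \<Rightarrow> ('a set \<Rightarrow> real) \<Rightarrow> 'a set \<Rightarrow> real" where
  "restrict_entropy X X' S A = Min {S (A \<union> H) | H. H \<subseteq> X - X'}"

end

theory Submission
  imports Defs
begin

text \<open>An EDF of \<open>S\<close> vanishing off \<open>X'\<close> has the same sum over \<open>A \<union> H\<close> as over \<open>A\<close>
  for every \<open>H \<subseteq> X - X'\<close>, so it is bounded by every candidate \<open>S (A \<union> H)\<close> and hence by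
  their minimum \<open>S' A\<close>. Conversely, for \<open>A \<subseteq> X\<close> the sum over \<open>A\<close> equals the sum over
  \<open>A \<inter> X'\<close>, which is bounded by \<open>S' (A \<inter> X') \<le> S ((A \<inter> X') \<union> (A - X')) = S A\<close>.\<close>

lemma restrict_entropy_candidates_finite:
  assumes "finite X"
  shows "finite {S (A \<union> H) | H. H \<subseteq> X - X'}"
proof -
  have "{S (A \<union> H) | H. H \<subseteq> X - X'} = (\<lambda>H. S (A \<union> H)) ` Pow (X - X')"
    by auto
  then show ?thesis
    using assms by simp
qed

lemma restrict_entropy_le:
  assumes "finite X" and "H \<subseteq> X - X'"
  shows "restrict_entropy X X' S A \<le> S (A \<union> H)"
  unfolding restrict_entropy_def
  by (rule Min_le[OF restrict_entropy_candidates_finite[OF assms(1)]]) (use assms(2) in blast)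

lemma le_restrict_entropy_iff:
  assumes "finite X"
  shows "c \<le> restrict_entropy X X' S A \<longleftrightarrow> (\<forall>H \<subseteq> X - X'. c \<le> S (A \<union> H))"
proof -
  have "{S (A \<union> H) | H. H \<subseteq> X - X'} \<noteq> {}"
    by blast
  then show ?thesis
    unfolding restrict_entropy_def
    by (auto simp: Min_ge_iff[OF restrict_entropy_candidates_finite[OF assms]])
qed

lemma sum_eq_sum_inter_if_vanishing:
  assumes "finite A" and "\<And>x. x \<notin> B \<Longrightarrow> f x = 0"
  shows "(\<Sum>x\<in>A. f x) = (\<Sum>x\<in>A \<inter> B. f x)"
  using assms by (intro sum.mono_neutral_right) auto

lemma EDF_set_restrict_entropy_subset:
  assumes "finite X" and "X' \<subseteq> X"
  shows "EDF_set X' (restrict_entropy X X' S) \<subseteq> EDF_set X S"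
proof
  fix f
  assume "f \<in> EDF_set X' (restrict_entropy X X' S)"
  then have vanish: "\<And>x. x \<notin> X' \<Longrightarrow> f x = 0"
    and bound: "\<And>A. A \<subseteq> X' \<Longrightarrow> \<bar>\<Sum>x\<in>A. f x\<bar> \<le> restrict_entropy X X' S A"
    unfolding EDF_set_def by auto
  have "\<bar>\<Sum>x\<in>A. f x\<bar> \<le> S A" if "A \<subseteq> X" for A
  proof -
    have "finite A"
      using that assms(1) finite_subset by blast
    then have "\<bar>\<Sum>x\<in>A. f x\<bar> = \<bar>\<Sum>x\<in>A \<inter> X'. f x\<bar>"
      using sum_eq_sum_inter_if_vanishing[of A X' f] vanish by simp
    also have "\<dots> \<le> restrict_entropy X X' S (A \<inter> X')"
      using bound by simp
    also have "\<dots> \<le> S ((A \<inter> X') \<union> (A - X'))"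
      using that assms(1) by (intro restrict_entropy_le) auto
    also have "(A \<inter> X') \<union> (A - X') = A"
      by blast
    finally show ?thesis .
  qed
  then show "f \<in> EDF_set X S"
    using vanish assms(2) unfolding EDF_set_def by auto
qed

lemma EDF_set_vanishing_subset_restrict_entropy:
  assumes "finite X" and "X' \<subseteq> X"
    and "f \<in> EDF_set X S" and vanish: "\<And>x. x \<in> X - X' \<Longrightarrow> f x = 0"
  shows "f \<in> EDF_set X' (restrict_entropy X X' S)"
proof -
  have vanish': "f x = 0" if "x \<notin> X'" for x
    using assms(3) vanish that unfolding EDF_set_def by blast
  have bound: "\<bar>\<Sum>x\<in>A. f x\<bar> \<le> S A" if "A \<subseteq> X" for A
    using assms(3) that unfolding EDF_set_def by blast
  have "\<bar>\<Sum>x\<in>A. f x\<bar> \<le> S (A \<union> H)" if "A \<subseteq> X'" and "H \<subseteq> X - X'" for A H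
  proof -
    have "A \<union> H \<subseteq> X"
      using that assms(2) by blast
    then have "finite (A \<union> H)"
      using assms(1) finite_subset by blast
    moreover have "(A \<union> H) \<inter> X' = A"
      using that by blast
    ultimately have "(\<Sum>x\<in>A \<union> H. f x) = (\<Sum>x\<in>A. f x)"
      using sum_eq_sum_inter_if_vanishing vanish' by metis
    then show ?thesis
      using bound \<open>A \<union> H \<subseteq> X\<close> by metis
  qed
  then show ?thesis
    using vanish' le_restrict_entropy_iff[OF assms(1)] unfolding EDF_set_def by auto
qed

theorem corollary28:
  fixes X X' :: "'a set" and S :: "'a set \<Rightarrow> real"
  assumes "finite X"
    and "entropy_function X S"
    and "X' \<subseteq> X"
  shows "EDF_set X' (restrict_entropy X X' S) =
           EDF_set X S \<inter> {f. \<forall>x \<in> X - X'. f x = 0}"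
proof
  show "EDF_set X' (restrict_entropy X X' S) \<subseteq> EDF_set X S \<inter> {f. \<forall>x \<in> X - X'. f x = 0}"
    using EDF_set_restrict_entropy_subset[OF assms(1,3)] by (auto simp: EDF_set_def)
  show "EDF_set X S \<inter> {f. \<forall>x \<in> X - X'. f x = 0} \<subseteq> EDF_set X' (restrict_entropy X X' S)"
    using EDF_set_vanishing_subset_restrict_entropy[OF assms(1,3)] by blast
qed

end
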